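(* Let $E$ be an Anderson $t$-module of dimension $d$ over $\mathscr O_L$ and $P$ a monic irreducible polynomial of $A$. Then the $P$-adic logarithm $\log_{\widetilde E,P}$ is injective on $\Omega_z^+=\{x\in\mathbb T_z(L_P)^d:v_P(x)>0\}$.
   Context: $\mathbb F_q$ finite field, $A=\mathbb F_q[\theta]$, $K=\mathbb F_q(\theta)$, $L/K$ finite, $\mathscr O_L$ integral closure of $A$ in $L$, $\tau$ the $q$-Frobenius. An Anderson $t$-module of dimension $d$ over $\mathscr O_L$ is an $\mathbb F_q$-algebra homomorphism $E:A\to M_d(\mathscr O_L)\{\tau\}$, $E_a=\sum_iE_{a,i}\tau^i$, with $(E_{a,0}-aI_d)^d=0$, $\deg_\tau E_\theta>0$. $\log_E=\sum l_n\tau^n$ is the unique series with $l_0=I_d$ and $\log_EE_a=E_{a,0}\log_E$. With $z$ an indeterminate fixed by $\tau$, $\widetilde E_a=\sum E_{a,i}z^i\tau^i$ and $\log_{\widetilde E}=\sum l_nz^n\tau^n$. $K_P$ is the $P$-adic completion of $K$, $\mathbb T_z(K_P)$ the Tate algebra in $z$ with Gauss valuation, $\mathbb T_z(L_P)=L\otimes_K\mathbb T_z(K_P)$, with $v_P(\sum f_i\otimes x_i)=\min v_P(x_i)$ for a fixed $A$-basis $(f_i)$ of $\mathscr O_L$, and minimum over coordinates on $d$-tuples. $\log_{\widetilde E,P}$ is $\log_{\widetilde E}$ viewed as a $P$-adic function; it converges on $\Omega_z^+$. *)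

theory Defs
  imports "HOL-Analysis.Finite_Cartesian_Product"
          "HOL-Computational_Algebra.Polynomial_Factorial"
          "HOL-Computational_Algebra.Fraction_Field"
          "HOL-Library.Extended_Real"
begin

text \<open>Setting: 'k is the finite field F_q (q = CARD('k)), A = 'k poly, K = 'k poly fract,
  L is a field 'l with a field embedding iota : K -> L, matrices are 'l^'d^'d (d = CARD('d)).\<close>

definition is_ring_hom :: "('a::ring_1 \<Rightarrow> 'b::ring_1) \<Rightarrow> bool" where
  "is_ring_hom f \<longleftrightarrow> f 0 = 0 \<and> f 1 = 1 \<and>
     (\<forall>x y. f (x + y) = f x + f y) \<and> (\<forall>x y. f (x * y) = f x * f y)"

definition embA :: "('k::field poly fract \<Rightarrow> 'l::field) \<Rightarrow> 'k poly \<Rightarrow> 'l" where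
  "embA \<iota> a = \<iota> (Fract a 1)"

definition finite_ext :: "('k::field poly fract \<Rightarrow> 'l::field) \<Rightarrow> bool" where
  "finite_ext \<iota> \<longleftrightarrow> (\<exists>(n::nat) (g::nat \<Rightarrow> 'l). \<forall>x. \<exists>c. x = (\<Sum>i<n. \<iota> (c i) * g i))"

definition OL :: "('k::field poly fract \<Rightarrow> 'l::field) \<Rightarrow> 'l set" where
  "OL \<iota> = {x. \<exists>p :: 'k poly poly. lead_coeff p = 1 \<and> poly (map_poly (embA \<iota>) p) x = 0}"

definition is_A_basis :: "('k::field poly fract \<Rightarrow> 'l::field) \<Rightarrow> ('b::finite \<Rightarrow> 'l) \<Rightarrow> bool" where
  "is_A_basis \<iota> f \<longleftrightarrow>
     (\<forall>x. x \<in> OL \<iota> \<longleftrightarrow> (\<exists>c :: 'b \<Rightarrow> 'k poly. x = (\<Sum>b\<in>UNIV. embA \<iota> (c b) * f b))) \<and>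
     (\<forall>c :: 'b \<Rightarrow> 'k poly. (\<Sum>b\<in>UNIV. embA \<iota> (c b) * f b) = 0 \<longrightarrow> (\<forall>b. c b = 0))"

text \<open>K-coordinates of an element of L in the basis f (an A-basis of O_L is a K-basis of L).\<close>
definition coordK :: "('k::field poly fract \<Rightarrow> 'l::field) \<Rightarrow> ('b::finite \<Rightarrow> 'l) \<Rightarrow> 'l \<Rightarrow> 'b \<Rightarrow> 'k poly fract" where
  "coordK \<iota> f x = (THE c. x = (\<Sum>b\<in>UNIV. \<iota> (c b) * f b))"

text \<open>Matrix power and entrywise q^i-th power (twisting by tau^i).\<close>
definition matpow :: "'a::semiring_1^'n^'n \<Rightarrow> nat \<Rightarrow> 'a^'n^'n" where
  "matpow M n = (((**) M) ^^ n) (mat 1)"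

definition frobM :: "'k::finite itself \<Rightarrow> nat \<Rightarrow> 'l::field^'d^'d \<Rightarrow> 'l^'d^'d" where
  "frobM _ i M = (\<chi> r s. (M $ r $ s) ^ (CARD('k) ^ i))"

text \<open>Anderson t-module E : A -> M_d(O_L){tau}, with E a i = E_{a,i}.\<close>
definition is_t_module :: "('k::{finite,field} poly fract \<Rightarrow> 'l::field) \<Rightarrow>
    ('k poly \<Rightarrow> nat \<Rightarrow> 'l^'d::finite^'d) \<Rightarrow> bool" where
  "is_t_module \<iota> E \<longleftrightarrow>
     (\<forall>a. \<exists>N. \<forall>i>N. E a i = 0) \<and>
     (\<forall>a i r s. E a i $ r $ s \<in> OL \<iota>) \<and>
     (\<forall>c. E [:c:] 0 = mat (embA \<iota> [:c:]) \<and> (\<forall>i>0. E [:c:] i = 0)) \<and>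
     (\<forall>a b i. E (a + b) i = E a i + E b i) \<and>
     (\<forall>a b n. E (a * b) n = (\<Sum>i\<le>n. E a i ** frobM TYPE('k) i (E b (n - i)))) \<and>
     (\<forall>a. matpow (E a 0 - mat (embA \<iota> a)) CARD('d) = 0) \<and>
     (\<exists>i>0. E [:0, 1:] i \<noteq> 0)"

text \<open>log_E = sum l_n tau^n: l_0 = I and log_E E_a = E_{a,0} log_E for all a.\<close>
definition logE :: "('k::{finite,field} poly \<Rightarrow> nat \<Rightarrow> 'l::field^'d::finite^'d) \<Rightarrow> nat \<Rightarrow> 'l^'d^'d" where
  "logE E = (THE l. l 0 = mat 1 \<and>
     (\<forall>a n. (\<Sum>i\<le>n. l i ** frobM TYPE('k) i (E a (n - i))) = E a 0 ** l n))"

text \<open>K_P: a completion of K for the P-adic valuation v_P; j : K -> K_P, w the valuation on K_P.\<close>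
definition is_P_adic_completion :: "'k::field_gcd poly \<Rightarrow> ('k poly fract \<Rightarrow> 'kp::field) \<Rightarrow> ('kp \<Rightarrow> ereal) \<Rightarrow> bool" where
  "is_P_adic_completion P j w \<longleftrightarrow> is_ring_hom j \<and>
     (\<forall>x. w x = \<infinity> \<longleftrightarrow> x = 0) \<and>
     (\<forall>x. x \<noteq> 0 \<longrightarrow> (\<exists>n::int. w x = ereal (real_of_int n))) \<and>
     (\<forall>x y. w (x * y) = w x + w y) \<and>
     (\<forall>x y. min (w x) (w y) \<le> w (x + y)) \<and>
     (\<forall>a b. a \<noteq> 0 \<and> b \<noteq> 0 \<longrightarrow>
        w (j (Fract a b)) = ereal (real_of_int (int (multiplicity P a) - int (multiplicity P b)))) \<and>
     (\<forall>s :: nat \<Rightarrow> 'kp. (\<forall>M::real. \<exists>N. \<forall>m\<ge>N. \<forall>n\<ge>N. ereal M \<le> w (s m - s n)) \<longrightarrow>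
        (\<exists>x. \<forall>M::real. \<exists>N. \<forall>n\<ge>N. ereal M \<le> w (s n - x))) \<and>
     (\<forall>x (M::real). \<exists>c. ereal M \<le> w (x - j c))"

text \<open>Elements of T_z(L_P)^d are represented as Y :: 'd => 'b => nat => 'kp:
  Y r b m is the coefficient of z^m of the f_b-coordinate of the r-th component.\<close>

definition is_tate :: "('kp \<Rightarrow> ereal) \<Rightarrow> ('d \<Rightarrow> 'b \<Rightarrow> nat \<Rightarrow> 'kp) \<Rightarrow> bool" where
  "is_tate w Y \<longleftrightarrow> (\<forall>r b. \<forall>M::real. \<exists>N. \<forall>m\<ge>N. ereal M \<le> w (Y r b m))"

definition vP :: "('kp \<Rightarrow> ereal) \<Rightarrow> ('d \<Rightarrow> 'b \<Rightarrow> nat \<Rightarrow> 'kp) \<Rightarrow> ereal" where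
  "vP w Y = (INF x\<in>UNIV. w (Y (fst x) (fst (snd x)) (snd (snd x))))"

definition Omega_plus :: "('kp \<Rightarrow> ereal) \<Rightarrow> ('d \<Rightarrow> 'b \<Rightarrow> nat \<Rightarrow> 'kp) set" where
  "Omega_plus w = {Y. is_tate w Y \<and> vP w Y > 0}"

text \<open>tau on T_z(L_P) = L (x) T_z(K_P): tau(f_i (x) y) = f_i^q (x) y^(q), coefficientwise on z.\<close>
definition tauLP :: "'k::{finite,field} itself \<Rightarrow> ('k poly fract \<Rightarrow> 'l::field) \<Rightarrow> ('k poly fract \<Rightarrow> 'kp::field) \<Rightarrow>
    ('b::finite \<Rightarrow> 'l) \<Rightarrow> ('d \<Rightarrow> 'b \<Rightarrow> nat \<Rightarrow> 'kp) \<Rightarrow> ('d \<Rightarrow> 'b \<Rightarrow> nat \<Rightarrow> 'kp)" where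
  "tauLP _ \<iota> j f Y = (\<lambda>r k m. \<Sum>i\<in>UNIV. j (coordK \<iota> f (f i ^ CARD('k)) k) * (Y r i m) ^ CARD('k))"

definition matLP :: "('k::field poly fract \<Rightarrow> 'l::field) \<Rightarrow> ('k poly fract \<Rightarrow> 'kp::field) \<Rightarrow>
    ('b::finite \<Rightarrow> 'l) \<Rightarrow> 'l^'d::finite^'d \<Rightarrow> ('d \<Rightarrow> 'b \<Rightarrow> nat \<Rightarrow> 'kp) \<Rightarrow> ('d \<Rightarrow> 'b \<Rightarrow> nat \<Rightarrow> 'kp)" where
  "matLP \<iota> j f M Y = (\<lambda>r k m. \<Sum>s\<in>UNIV. \<Sum>i\<in>UNIV. j (coordK \<iota> f (M $ r $ s * f i) k) * Y s i m)"

text \<open>log_{E~,P}(Y) = sum_n l_n z^n tau^n(Y); the coefficient of z^m only involves n \<le> m.\<close>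
definition logEP :: "('k::{finite,field} poly fract \<Rightarrow> 'l::field) \<Rightarrow> ('k poly fract \<Rightarrow> 'kp::field) \<Rightarrow>
    ('b::finite \<Rightarrow> 'l) \<Rightarrow> ('k poly \<Rightarrow> nat \<Rightarrow> 'l^'d::finite^'d) \<Rightarrow>
    ('d \<Rightarrow> 'b \<Rightarrow> nat \<Rightarrow> 'kp) \<Rightarrow> ('d \<Rightarrow> 'b \<Rightarrow> nat \<Rightarrow> 'kp)" where
  "logEP \<iota> j f E Y = (\<lambda>r k m. \<Sum>n\<le>m.
      matLP \<iota> j f (logE E n) ((tauLP TYPE('k) \<iota> j f ^^ n) Y) r k (m - n))"

end

theory Submission
  imports Defs "HOL-Analysis.Cartesian_Space"
begin

text \<open>Write \<open>log\<^sub>E = \<Sum> l\<^sub>n \<tau>\<^sup>n\<close>. Comparing coefficients of \<open>\<tau>\<^sup>n\<close> in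
  \<open>log\<^sub>E E\<^sub>\<theta> = E\<^sub>\<theta>\<^sub>,\<^sub>0 log\<^sub>E\<close> gives a Sylvester equation
  \<open>l\<^sub>n \<tau>\<^sup>n(E\<^sub>\<theta>\<^sub>,\<^sub>0) - E\<^sub>\<theta>\<^sub>,\<^sub>0 l\<^sub>n = (terms in l\<^sub>0, \<dots>, l\<^sub>n\<^sub>-\<^sub>1)\<close>.
  Since \<open>E\<^sub>\<theta>\<^sub>,\<^sub>0\<close> and \<open>\<tau>\<^sup>n(E\<^sub>\<theta>\<^sub>,\<^sub>0)\<close> are \<open>\<theta>\<close> and \<open>\<theta>\<^bsup>q\<^sup>n\<^esup> \<noteq> \<theta>\<close> plus
  nilpotent matrices, it is uniquely solvable, so there is exactly one such series with
  \<open>l\<^sub>0 = 1\<close>; associativity of \<open>M\<^sub>d(L){\<tau>}\<close> and commutativity of \<open>A\<close> show that it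
  intertwines every \<open>E\<^sub>a\<close>, hence it is \<open>log\<^sub>E\<close> and \<open>l\<^sub>0 = 1\<close>.
  The \<open>z\<^sup>m\<close>-coefficient of the \<open>P\<close>-adic logarithm of \<open>Y\<close> is then \<open>Y\<^sub>m\<close> plus terms
  involving only \<open>Y\<^sub>0, \<dots>, Y\<^sub>m\<^sub>-\<^sub>1\<close>, and injectivity follows by induction on \<open>m\<close>.\<close>

section \<open>Matrices\<close>

lemma matrix_add_rdistrib: "((A::'a::semiring_1^'n::finite^'m::finite) + B) ** C = A ** C + B ** C"
  by (simp add: matrix_matrix_mult_def vec_eq_iff sum.distrib distrib_right)

lemma matrix_diff_ldistrib: "(A::'a::ring_1^'n::finite^'m::finite) ** (B - C) = A ** B - A ** C"
  by (simp add: matrix_matrix_mult_def vec_eq_iff sum_subtractf right_diff_distrib)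

lemma matrix_diff_rdistrib: "((A::'a::ring_1^'n::finite^'m::finite) - B) ** C = A ** C - B ** C"
  by (simp add: matrix_matrix_mult_def vec_eq_iff sum_subtractf left_diff_distrib)

lemma matrix_neg_left: "(- A::'a::ring_1^'n::finite^'m::finite) ** B = - (A ** B)"
  using matrix_diff_rdistrib[of 0 A B] by simp

lemma matrix_sum_left: "(\<Sum>i\<in>S. A i) ** (B::'a::semiring_1^'n::finite^'m::finite) = (\<Sum>i\<in>S. A i ** B)"
  by (induction S rule: infinite_finite_induct) (simp_all add: matrix_add_rdistrib)

lemma matrix_sum_right: "(B::'a::semiring_1^'n::finite^'m::finite) ** (\<Sum>i\<in>S. A i) = (\<Sum>i\<in>S. B ** A i)"
  by (induction S rule: infinite_finite_induct) (simp_all add: matrix_add_ldistrib)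

lemma mat_diff: "mat (a - b) = (mat a - mat b :: 'a::ring_1^'n::finite^'n)"
  by (simp add: mat_def vec_eq_iff)

lemma mat_mult_left: "mat c ** (A::'a::semiring_1^'n::finite^'m::finite) = (\<chi> i j. c * A $ i $ j)"
  by (simp add: matrix_matrix_mult_def mat_def vec_eq_iff if_distrib if_distribR sum.delta'
      cong: if_cong)

lemma mat_mult_right: "(A::'a::semiring_1^'n::finite^'m::finite) ** mat c = (\<chi> i j. A $ i $ j * c)"
  by (simp add: matrix_matrix_mult_def mat_def vec_eq_iff if_distrib if_distribR sum.delta'
      cong: if_cong)

lemma mat_mult_commute: "mat c ** (A::'a::comm_semiring_1^'n::finite^'m::finite) = A ** mat c"
  by (simp add: mat_mult_left mat_mult_right mult.commute)

lemma mat_mult_mat: "mat a ** mat b = (mat (a * b) :: 'a::semiring_1^'n::finite^'n)"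
  unfolding mat_mult_left by (simp add: mat_def vec_eq_iff)

lemma matpow_0 [simp]: "matpow M 0 = mat 1"
  by (simp add: matpow_def)

lemma matpow_Suc: "matpow M (Suc n) = M ** matpow M n"
  by (simp add: matpow_def)

lemma matpow_Suc_right: "matpow (M::'a::semiring_1^'n::finite^'n) (Suc n) = matpow M n ** M"
  by (induction n) (simp_all add: matpow_Suc matrix_mul_assoc)

lemma matrix_fixpoint_iterate:
  fixes A B X :: "'a::semiring_1^'n::finite^'n"
  assumes "X = A ** X ** B"
  shows "X = matpow A k ** X ** matpow B k"
proof (induction k)
  case (Suc k)
  have "matpow A k ** X ** matpow B k = matpow A k ** (A ** X ** B) ** matpow B k"
    by (simp flip: assms)
  also have "\<dots> = matpow A (Suc k) ** X ** matpow B (Suc k)"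
    by (simp add: matpow_Suc_right[of A] matpow_Suc[of B] matrix_mul_assoc)
  finally show ?case using Suc.IH by simp
qed simp

text \<open>A discrete Neumann series: \<open>X \<mapsto> A X B\<close> is nilpotent once \<open>A\<close> or \<open>B\<close> is.\<close>
lemma matrix_fixpoint_nilpotent_iff:
  fixes A B C X :: "'a::ring_1^'n::finite^'n"
  assumes nil: "matpow A n = 0 \<or> matpow B n = 0"
  shows "X = C + A ** X ** B \<longleftrightarrow> X = (\<Sum>k<n. matpow A k ** C ** matpow B k)"
proof -
  define S where "S = (\<Sum>k<n. matpow A k ** C ** matpow B k)"
  have "C + A ** S ** B = (\<Sum>k<Suc n. matpow A k ** C ** matpow B k)"
    unfolding S_def matrix_sum_left matrix_sum_right sum.lessThan_Suc_shift
    by (simp add: matpow_Suc[of A] matpow_Suc_right[of B] matrix_mul_assoc)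
  also have "\<dots> = S"
    using nil by (auto simp: S_def)
  finally have S_sol: "S = C + A ** S ** B" ..
  have "X = S" if "X = C + A ** X ** B"
  proof -
    have "X - S = (C + A ** X ** B) - (C + A ** S ** B)"
      using that S_sol by metis
    also have "\<dots> = A ** (X - S) ** B"
      by (simp add: matrix_diff_ldistrib matrix_diff_rdistrib)
    finally have "X - S = matpow A n ** (X - S) ** matpow B n"
      by (rule matrix_fixpoint_iterate)
    then show "X = S"
      using nil by auto
  qed
  with S_sol show ?thesis
    unfolding S_def by blast
qed

lemma invertible_mat_minus_nilpotent:
  fixes N :: "'a::field^'n::finite^'n"
  assumes "c \<noteq> 0" and "matpow N n = 0"
  shows "invertible (mat c - N)"
proof -
  define G where "G = (\<Sum>k<n. matpow N k ** mat (1 / c) ** matpow (mat (1 / c)) k)"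
  have G: "G = mat (1 / c) + N ** G ** mat (1 / c)"
    using matrix_fixpoint_nilpotent_iff[where A = N and B = "mat (1 / c)" and C = "mat (1 / c)"]
      assms(2) G_def by blast
  have "mat c ** (N ** G ** mat (1 / c)) = (N ** G ** mat (1 / c)) ** mat c"
    by (rule mat_mult_commute)
  also have "\<dots> = N ** G"
    using assms(1) by (simp flip: matrix_mul_assoc add: mat_mult_mat)
  finally have "mat c ** G = mat 1 + N ** G"
    using assms(1) by (subst G) (simp add: matrix_add_ldistrib mat_mult_mat)
  then have "(mat c - N) ** G = mat 1"
    by (simp add: matrix_diff_rdistrib)
  then show ?thesis
    using invertible_right_inverse by blast
qed

lemma sylvester_unique_solution:
  fixes N N' R :: "'a::field^'n::finite^'n"
  assumes "matpow N n = 0" and "matpow N' n = 0" and "s \<noteq> t"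
  shows "\<exists>!X. X ** (mat s + N') - (mat t + N) ** X = R"
proof -
  obtain G where G: "(mat (s - t) - N) ** G = mat 1" "G ** (mat (s - t) - N) = mat 1"
    using invertible_mat_minus_nilpotent[of "s - t" N n] assms unfolding invertible_def by auto
  have "X ** (mat s + N') - (mat t + N) ** X = (mat (s - t) - N) ** X + X ** N'" for X
    using mat_mult_commute[of s X]
    by (simp add: matrix_add_ldistrib matrix_add_rdistrib matrix_diff_rdistrib mat_diff)
  also have "(mat (s - t) - N) ** X + X ** N' = (mat (s - t) - N) ** (X + G ** X ** N')" for X
    by (simp add: matrix_add_ldistrib matrix_mul_assoc G(1))
  finally have sylvester: "X ** (mat s + N') - (mat t + N) ** X = (mat (s - t) - N) ** (X + G ** X ** N')"
    for X .
  have cancel: "(mat (s - t) - N) ** Y = R \<longleftrightarrow> Y = G ** R" for Y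
  proof
    assume "(mat (s - t) - N) ** Y = R"
    then have "(G ** (mat (s - t) - N)) ** Y = G ** R"
      by (simp flip: matrix_mul_assoc)
    then show "Y = G ** R"
      by (simp add: G(2))
  qed (simp add: matrix_mul_assoc G(1))
  have "X ** (mat s + N') - (mat t + N) ** X = R \<longleftrightarrow> X = G ** R + (- G) ** X ** N'" for X
    unfolding sylvester cancel by (auto simp: matrix_neg_left algebra_simps)
  also have "\<dots> X \<longleftrightarrow> X = (\<Sum>k<n. matpow (- G) k ** (G ** R) ** matpow N' k)" for X
    using assms(2) by (intro matrix_fixpoint_nilpotent_iff) simp
  finally show ?thesis
    by simp
qed

section \<open>Ring homomorphisms and the Frobenius of \<open>\<bbbF>\<^sub>q\<close>\<close>

lemma is_ring_hom_of_nat: "is_ring_hom h \<Longrightarrow> h (of_nat n) = of_nat n"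
  by (induction n) (simp_all add: is_ring_hom_def)

lemma is_ring_hom_diff:
  assumes "is_ring_hom (h :: 'a::ring_1 \<Rightarrow> 'b::ring_1)"
  shows "h (x - y) = h x - h y"
  using assms unfolding is_ring_hom_def by (metis add_diff_cancel diff_add_cancel)

lemma is_ring_hom_power: "is_ring_hom h \<Longrightarrow> h (x ^ n) = h x ^ n"
  by (induction n) (simp_all add: is_ring_hom_def)

lemma is_ring_hom_sum: "is_ring_hom h \<Longrightarrow> h (\<Sum>i\<in>S. f i) = (\<Sum>i\<in>S. h (f i))"
  by (induction S rule: infinite_finite_induct) (simp_all add: is_ring_hom_def)

lemma is_ring_hom_inj:
  fixes h :: "'a::field \<Rightarrow> 'b::field"
  assumes "is_ring_hom h"
  shows "inj h"
proof (rule injI)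
  fix x y
  assume "h x = h y"
  show "x = y"
  proof (rule ccontr)
    assume "x \<noteq> y"
    then have "h (x - y) * h (inverse (x - y)) = 1"
      using assms by (metis divide_self_if divide_inverse is_ring_hom_def right_minus_eq)
    with \<open>h x = h y\<close> show False
      using assms by (simp add: is_ring_hom_diff)
  qed
qed

lemma is_ring_hom_comp: "is_ring_hom g \<Longrightarrow> is_ring_hom h \<Longrightarrow> is_ring_hom (g \<circ> h)"
  by (simp add: is_ring_hom_def)

lemma is_ring_hom_power_iterate:
  assumes "is_ring_hom (\<lambda>x::'a::comm_ring_1. x ^ q)"
  shows "is_ring_hom (\<lambda>x::'a. x ^ (q ^ n))"
proof (induction n)
  case 0
  then show ?case
    by (simp add: is_ring_hom_def)
next
  case (Suc n)
  have "(\<lambda>x::'a. x ^ (q ^ Suc n)) = (\<lambda>x. x ^ (q ^ n)) \<circ> (\<lambda>x. x ^ q)"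
    by (simp add: fun_eq_iff power_mult)
  then show ?case
    using Suc.IH assms by (simp add: is_ring_hom_comp)
qed

lemma map_matrix_add:
  "is_ring_hom h \<Longrightarrow> map_matrix h (A + B) = map_matrix h A + map_matrix h B"
  by (simp add: is_ring_hom_def vec_eq_iff)

lemma map_matrix_mult:
  "is_ring_hom h \<Longrightarrow> map_matrix h (A ** B) = map_matrix h A ** map_matrix h B"
  by (simp add: matrix_matrix_mult_def vec_eq_iff is_ring_hom_sum) (simp add: is_ring_hom_def)

lemma map_matrix_mat: "is_ring_hom h \<Longrightarrow> map_matrix h (mat c) = mat (h c)"
  by (simp add: mat_def vec_eq_iff is_ring_hom_def)

lemma map_matrix_0: "is_ring_hom h \<Longrightarrow> map_matrix h 0 = 0"
  by (simp add: vec_eq_iff is_ring_hom_def)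

lemma map_matrix_sum:
  "is_ring_hom h \<Longrightarrow> map_matrix h (\<Sum>i\<in>S. A i) = (\<Sum>i\<in>S. map_matrix h (A i))"
  by (induction S rule: infinite_finite_induct) (simp_all add: map_matrix_0 map_matrix_add)

lemma map_matrix_matpow:
  "is_ring_hom h \<Longrightarrow> map_matrix h (matpow M n) = matpow (map_matrix h M) n"
  by (induction n) (simp_all add: matpow_Suc map_matrix_mult map_matrix_mat is_ring_hom_def)

lemma finite_field_power_card: "(x::'k::{finite,field}) ^ CARD('k) = x"
proof (cases "x = 0")
  case False
  let ?U = "UNIV - {0::'k}"
  have "bij_betw ((*) x) ?U ?U"
    using False by (intro bij_betwI[where g = "\<lambda>y. y / x"]) auto
  then have "(\<Prod>y\<in>?U. x * y) = \<Prod>?U"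
    by (rule prod.reindex_bij_betw)
  then have "x ^ card ?U * \<Prod>?U = 1 * \<Prod>?U"
    by (simp add: prod.distrib)
  then have "x ^ card ?U = 1"
    by (subst (asm) mult_cancel_right) simp
  moreover have "card ?U = CARD('k) - 1"
    by (simp add: card_Diff_singleton)
  moreover have "x ^ CARD('k) = x * x ^ (CARD('k) - 1)"
    by (subst power_eq_if) (simp add: finite_UNIV_card_ge_0)
  ultimately show ?thesis
    by simp
qed (simp add: finite_UNIV_card_ge_0)

text \<open>\<open>(1 + X)\<^sup>q - X\<^sup>q - 1\<close> vanishes on all of \<open>\<bbbF>\<^sub>q\<close> but has degree below \<open>q\<close>.\<close>
lemma finite_field_card_choose_eq_0:
  assumes "0 < i" and "i < CARD('k::{finite,field})"
  shows "of_nat (CARD('k) choose i) = (0::'k)"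
proof -
  define q where "q = CARD('k)"
  define g :: "'k poly" where "g = [:1, 1:] ^ q - monom 1 q - 1"
  have "0 < q"
    using assms by (simp add: q_def)
  have coeff_g: "coeff g m = (if 0 < m \<and> m < q then of_nat (q choose m) else 0)" for m
  proof (cases "m \<le> q")
    case True
    with \<open>0 < q\<close> show ?thesis
      by (auto simp: g_def coeff_monom coeff_linear_poly_power)
  next
    case False
    then have "coeff ([:1, 1:] ^ q) m = 0"
      by (intro coeff_eq_0) (simp add: degree_linear_power)
    with False show ?thesis
      by (simp add: g_def coeff_monom)
  qed
  have "g = 0"
  proof (rule ccontr)
    assume "g \<noteq> 0"
    then have "card {x. poly g x = 0} \<le> degree g"
      by (rule card_poly_roots_bound)
    also have "degree g < q"
      using assms coeff_g by (intro degree_lessI) (auto simp: q_def)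
    also have "{x. poly g x = 0} = UNIV"
      by (simp add: g_def q_def poly_monom finite_field_power_card)
    finally show False
      by (simp add: q_def)
  qed
  then show ?thesis
    using coeff_g[of i] assms by (simp add: q_def)
qed

lemma freshmans_dream_binomial:
  fixes x y :: "'a::comm_semiring_1"
  assumes "0 < q" and "\<And>i. 0 < i \<Longrightarrow> i < q \<Longrightarrow> of_nat (q choose i) = (0::'a)"
  shows "(x + y) ^ q = x ^ q + y ^ q"
proof -
  have "(x + y) ^ q = (\<Sum>i\<le>q. of_nat (q choose i) * x ^ i * y ^ (q - i))"
    by (rule binomial_ring)
  also have "\<dots> = (\<Sum>i\<in>{0, q}. of_nat (q choose i) * x ^ i * y ^ (q - i))"
    using assms(2) by (intro sum.mono_neutral_right) auto
  finally show ?thesis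
    using assms(1) by (simp add: add.commute)
qed

lemma is_ring_hom_frobenius:
  fixes \<iota> :: "'k::{finite,field} poly fract \<Rightarrow> 'l::comm_ring_1"
  assumes "is_ring_hom \<iota>"
  shows "is_ring_hom (\<lambda>x::'l. x ^ CARD('k))"
proof -
  have "of_nat (CARD('k) choose i) = (0::'l)" if "0 < i" "i < CARD('k)" for i
  proof -
    have "of_nat (CARD('k) choose i) = (0::'k poly fract)"
      using finite_field_card_choose_eq_0[OF that]
      by (simp add: of_nat_fract of_nat_poly Zero_fract_def)
    then show ?thesis
      using is_ring_hom_of_nat[OF assms, of "CARD('k) choose i"] assms by (simp add: is_ring_hom_def)
  qed
  moreover have "CARD('k) \<noteq> 0"
    by (simp add: finite_UNIV_card_ge_0)
  ultimately show ?thesis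
    unfolding is_ring_hom_def by (simp add: power_mult_distrib freshmans_dream_binomial power_0_left)
qed

section \<open>Skew polynomials with matrix coefficients\<close>

lemma frobM_eq_map_matrix:
  "frobM (t :: 'k::finite itself) i M = map_matrix (\<lambda>x. x ^ (CARD('k) ^ i)) M"
  by (simp add: frobM_def map_matrix_def)

lemma frobM_0 [simp]: "frobM t 0 M = M"
  by (simp add: frobM_def vec_eq_iff)

lemma frobM_frobM: "frobM (t :: 'k::finite itself) i (frobM t j M) = frobM t (i + j) M"
  by (simp add: frobM_def vec_eq_iff power_add mult.commute flip: power_mult)

context
  fixes t :: "'k::finite itself"
  assumes frobenius: "is_ring_hom (\<lambda>x::'l::field. x ^ CARD('k))"
begin

lemma is_ring_hom_frobenius_iterate: "is_ring_hom (\<lambda>x::'l. x ^ (CARD('k) ^ i))"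
  using frobenius by (rule is_ring_hom_power_iterate)

lemma frobM_add: "frobM t i (A + B) = frobM t i A + frobM t i (B :: 'l^'d::finite^'d)"
  by (simp add: frobM_eq_map_matrix map_matrix_add is_ring_hom_frobenius_iterate)

lemma frobM_mult: "frobM t i (A ** B) = frobM t i A ** frobM t i (B :: 'l^'d::finite^'d)"
  by (simp add: frobM_eq_map_matrix map_matrix_mult is_ring_hom_frobenius_iterate)

lemma frobM_sum: "frobM t i (\<Sum>j\<in>S. A j) = (\<Sum>j\<in>S. frobM t i (A j :: 'l^'d::finite^'d))"
  by (simp add: frobM_eq_map_matrix map_matrix_sum is_ring_hom_frobenius_iterate)

lemma frobM_mat: "frobM t i (mat c :: 'l^'d::finite^'d) = mat (c ^ (CARD('k) ^ i))"
  by (simp add: frobM_eq_map_matrix map_matrix_mat is_ring_hom_frobenius_iterate)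

lemma frobM_matpow: "frobM t i (matpow M n) = matpow (frobM t i M) (n :: nat)"
  for M :: "'l^'d::finite^'d"
  by (simp add: frobM_eq_map_matrix map_matrix_matpow is_ring_hom_frobenius_iterate)

lemma frobM_zero: "frobM t i (0 :: 'l^'d::finite^'d) = 0"
  by (simp add: frobM_eq_map_matrix map_matrix_0 is_ring_hom_frobenius_iterate)

end

text \<open>Multiplication of \<open>\<Sum> A\<^sub>i \<tau>\<^sup>i\<close> and \<open>\<Sum> B\<^sub>i \<tau>\<^sup>i\<close> in \<open>M\<^sub>d(L){\<tau>}\<close>, on coefficient sequences.\<close>
definition tau_mult :: "'k::finite itself \<Rightarrow> (nat \<Rightarrow> 'l::field^'d::finite^'d) \<Rightarrow>
    (nat \<Rightarrow> 'l^'d^'d) \<Rightarrow> nat \<Rightarrow> 'l^'d^'d" where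
  "tau_mult t A B n = (\<Sum>i\<le>n. A i ** frobM t i (B (n - i)))"

definition tau_const :: "'a::zero \<Rightarrow> nat \<Rightarrow> 'a" where
  "tau_const X n = (if n = 0 then X else 0)"

lemma tau_mult_0: "tau_mult t A B 0 = A 0 ** B 0"
  by (simp add: tau_mult_def)

lemma tau_mult_split_last:
  "tau_mult t A B n = (\<Sum>i<n. A i ** frobM t i (B (n - i))) + A n ** frobM t n (B 0)"
  by (simp add: tau_mult_def flip: lessThan_Suc_atMost)

lemma tau_mult_const_left: "tau_mult t (tau_const X) B n = X ** B n"
proof -
  have "tau_mult t (tau_const X) B n = (\<Sum>i\<in>{0}. tau_const X i ** frobM t i (B (n - i)))"
    unfolding tau_mult_def by (intro sum.mono_neutral_right) (auto simp: tau_const_def)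
  then show ?thesis
    by (simp add: tau_const_def)
qed

lemma tau_mult_diff_left: "tau_mult t (A - A') B n = tau_mult t A B n - tau_mult t A' B n"
  by (simp add: tau_mult_def matrix_diff_rdistrib sum_subtractf)

lemma tau_mult_assoc:
  fixes t :: "'k::finite itself" and A B C :: "nat \<Rightarrow> 'l::field^'d::finite^'d"
  assumes frobenius: "is_ring_hom (\<lambda>x::'l. x ^ CARD('k))"
  shows "tau_mult t (tau_mult t A B) C n = tau_mult t A (tau_mult t B C) n"
proof -
  define h where "h k m = A k ** frobM t k (B m) ** frobM t (k + m) (C (n - k - m))" for k m
  have "tau_mult t A (tau_mult t B C) n = (\<Sum>k\<le>n. \<Sum>m\<le>n - k. h k m)"
    unfolding tau_mult_def h_def
    by (simp add: frobM_sum[OF frobenius] frobM_mult[OF frobenius] frobM_frobM matrix_sum_right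
        matrix_mul_assoc)
  also have "\<dots> = (\<Sum>(k, m)\<in>{(k, m). k + m \<le> n}. h k m)"
    by (simp add: pairs_le_eq_Sigma sum.Sigma)
  also have "\<dots> = (\<Sum>i\<le>n. \<Sum>k\<le>i. h k (i - k))"
    by (rule sum.triangle_reindex_eq)
  also have "\<dots> = tau_mult t (tau_mult t A B) C n"
    unfolding tau_mult_def matrix_sum_left h_def
    by (intro sum.cong refl) (simp add: frobM_frobM)
  finally show ?thesis ..
qed

section \<open>The logarithm of an Anderson \<open>t\<close>-module\<close>

lemma is_ring_hom_embA:
  assumes "is_ring_hom \<iota>"
  shows "is_ring_hom (embA \<iota>)"
proof -
  from assms have add: "\<iota> (a + b) = \<iota> a + \<iota> b" and mult: "\<iota> (a * b) = \<iota> a * \<iota> b" for a b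
    by (simp_all add: is_ring_hom_def)
  have "\<iota> (Fract (x + y) 1) = \<iota> (Fract x 1) + \<iota> (Fract y 1)" for x y
    using add[of "Fract x 1" "Fract y 1"] by simp
  moreover have "\<iota> (Fract (x * y) 1) = \<iota> (Fract x 1) * \<iota> (Fract y 1)" for x y
    using mult[of "Fract x 1" "Fract y 1"] by simp
  ultimately show ?thesis
    using assms by (simp add: is_ring_hom_def embA_def Zero_fract_def One_fract_def)
qed

lemma inj_embA:
  fixes \<iota> :: "'k::field poly fract \<Rightarrow> 'l::field"
  assumes "is_ring_hom \<iota>"
  shows "inj (embA \<iota>)"
proof (rule injI)
  fix x y
  assume "embA \<iota> x = embA \<iota> y"
  then have "Fract x 1 = Fract y 1"
    using is_ring_hom_inj[OF assms] by (simp add: embA_def inj_eq)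
  then show "x = y"
    by (simp add: eq_fract)
qed

lemma embA_theta_power_ne:
  fixes \<iota> :: "'k::{finite,field} poly fract \<Rightarrow> 'l::field"
  assumes "is_ring_hom \<iota>" and "0 < n"
  shows "embA \<iota> [:0, 1:] ^ (CARD('k) ^ n) \<noteq> embA \<iota> [:0, 1:]"
proof
  assume "embA \<iota> [:0, 1:] ^ (CARD('k) ^ n) = embA \<iota> [:0, 1:]"
  then have "embA \<iota> ([:0, 1:] ^ (CARD('k) ^ n)) = embA \<iota> [:0, 1:]"
    by (simp add: is_ring_hom_power[OF is_ring_hom_embA[OF assms(1)]])
  then have theta: "[:0, 1:] ^ (CARD('k) ^ n) = ([:0, 1:] :: 'k poly)"
    using inj_embA[OF assms(1)] by (simp add: inj_eq)
  have "CARD('k) ^ n = degree ([:0, 1:] ^ (CARD('k) ^ n) :: 'k poly)"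
    by (rule degree_linear_power[symmetric])
  also have "\<dots> = 1"
    by (subst theta) simp
  finally have "CARD('k) ^ n = 1" .
  moreover have "1 < CARD('k)"
    using card_mono[of "UNIV :: 'k set" "{0, 1}"] by simp
  ultimately show False
    using assms(2) one_less_power by fastforce
qed

text \<open>The coefficients of \<open>log\<^sub>E\<close>, solved for degree by degree from
  \<open>log\<^sub>E E\<^sub>\<theta> = E\<^sub>\<theta>\<^sub>,\<^sub>0 log\<^sub>E\<close>; the \<open>THE\<close> is a genuine unique solution only for
  \<open>t\<close>-modules (\<open>t_module_twisted_sylvester\<close>).\<close>
function log_theta :: "('k::{finite,field} poly \<Rightarrow> nat \<Rightarrow> 'l::field^'d::finite^'d) \<Rightarrow> nat \<Rightarrow> 'l^'d^'d"
  where
  "log_theta E n = (if n = 0 then mat 1 else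
     (THE X. X ** frobM TYPE('k) n (E [:0, 1:] 0) - E [:0, 1:] 0 ** X =
        - (\<Sum>i<n. log_theta E i ** frobM TYPE('k) i (E [:0, 1:] (n - i)))))"
  by auto
termination
  by (relation "measure snd") auto

declare log_theta.simps [simp del]

lemma log_theta_0 [simp]: "log_theta E 0 = mat 1"
  by (subst log_theta.simps) simp

context
  fixes \<iota> :: "'k::{finite,field} poly fract \<Rightarrow> 'l::field"
    and E :: "'k poly \<Rightarrow> nat \<Rightarrow> 'l^'d::finite^'d"
  assumes hom: "is_ring_hom \<iota>" and tm: "is_t_module \<iota> E"
begin

lemma t_module_frobenius: "is_ring_hom (\<lambda>x::'l. x ^ CARD('k))"
  using hom by (rule is_ring_hom_frobenius)

lemma t_module_mult: "E (a * b) n = tau_mult TYPE('k) (E a) (E b) n"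
  using tm unfolding is_t_module_def tau_mult_def by blast

lemma t_module_nilpotent: "matpow (E a 0 - mat (embA \<iota> a)) CARD('d) = 0"
  using tm unfolding is_t_module_def by blast

lemma t_module_twisted_sylvester:
  assumes "0 < n"
  shows "\<exists>!X. X ** frobM TYPE('k) n (E [:0, 1:] 0) - E [:0, 1:] 0 ** X = R"
proof -
  define \<theta> where "\<theta> = embA \<iota> [:0, 1:]"
  define N where "N = E [:0, 1:] 0 - mat \<theta>"
  have frob_hom: "is_ring_hom (\<lambda>x::'l. x ^ CARD('k))"
    by (rule t_module_frobenius)
  have "matpow N CARD('d) = 0"
    unfolding N_def \<theta>_def by (rule t_module_nilpotent)
  moreover have "matpow (frobM TYPE('k) n N) CARD('d) = 0"
    using calculation by (simp add: frobM_matpow[OF frob_hom, symmetric] frobM_zero[OF frob_hom])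
  moreover have "\<theta> ^ (CARD('k) ^ n) \<noteq> \<theta>"
    unfolding \<theta>_def using hom assms by (rule embA_theta_power_ne)
  ultimately have "\<exists>!X. X ** (mat (\<theta> ^ (CARD('k) ^ n)) + frobM TYPE('k) n N) - (mat \<theta> + N) ** X = R"
    by (rule sylvester_unique_solution)
  moreover have "E [:0, 1:] 0 = mat \<theta> + N"
    by (simp add: N_def)
  ultimately show ?thesis
    by (simp add: frobM_add[OF frob_hom] frobM_mat[OF frob_hom])
qed

lemma t_module_intertwiner_eq_0:
  assumes "F 0 = 0" and "\<And>n. tau_mult TYPE('k) F (E [:0, 1:]) n = E [:0, 1:] 0 ** F n"
  shows "F n = 0"
proof (induction n rule: less_induct)
  case (less n)
  show ?case
  proof (cases "n = 0")
    case False
    have "tau_mult TYPE('k) F (E [:0, 1:]) n = F n ** frobM TYPE('k) n (E [:0, 1:] 0)"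
      using less.IH by (simp add: tau_mult_split_last)
    then have "F n ** frobM TYPE('k) n (E [:0, 1:] 0) - E [:0, 1:] 0 ** F n = 0"
      using assms(2) by simp
    moreover have "0 ** frobM TYPE('k) n (E [:0, 1:] 0) - E [:0, 1:] 0 ** 0 = 0"
      by simp
    ultimately show ?thesis
      using t_module_twisted_sylvester[of n 0] False by blast
  qed (use assms(1) in simp)
qed

lemma log_theta_intertwines_theta:
  "tau_mult TYPE('k) (log_theta E) (E [:0, 1:]) n = E [:0, 1:] 0 ** log_theta E n"
proof (cases "n = 0")
  case True
  then show ?thesis
    by (simp add: tau_mult_0)
next
  case False
  define S where "S = (\<Sum>i<n. log_theta E i ** frobM TYPE('k) i (E [:0, 1:] (n - i)))"
  have "\<exists>!X. X ** frobM TYPE('k) n (E [:0, 1:] 0) - E [:0, 1:] 0 ** X = - S"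
    using False by (intro t_module_twisted_sylvester) simp
  moreover have "log_theta E n =
      (THE X. X ** frobM TYPE('k) n (E [:0, 1:] 0) - E [:0, 1:] 0 ** X = - S)"
    using False unfolding S_def by (subst log_theta.simps) simp
  ultimately have "log_theta E n ** frobM TYPE('k) n (E [:0, 1:] 0) - E [:0, 1:] 0 ** log_theta E n = - S"
    using theI' by simp
  then show ?thesis
    by (simp add: tau_mult_split_last S_def algebra_simps)
qed

lemma log_theta_intertwines:
  "tau_mult TYPE('k) (log_theta E) (E a) n = E a 0 ** log_theta E n"
proof -
  let ?mult = "tau_mult TYPE('k)" and ?l = "log_theta E" and ?D = "E [:0, 1:] 0"
  have frob_hom: "is_ring_hom (\<lambda>x::'l. x ^ CARD('k))"
    by (rule t_module_frobenius)
  have l_theta: "?mult ?l (E [:0, 1:]) = ?mult (tau_const ?D) ?l"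
    by (simp add: fun_eq_iff log_theta_intertwines_theta tau_mult_const_left)
  have E_commute: "?mult (E a) (E [:0, 1:]) = ?mult (E [:0, 1:]) (E a)"
    by (simp add: fun_eq_iff mult.commute flip: t_module_mult)
  have "?mult (E a) (E [:0, 1:]) 0 = ?mult (E [:0, 1:]) (E a) 0"
    by (simp only: E_commute)
  then have D_commute: "E a 0 ** ?D = ?D ** E a 0"
    by (simp only: tau_mult_0)
  define F where "F = ?mult ?l (E a) - ?mult (tau_const (E a 0)) ?l"
  have F: "F m = ?mult ?l (E a) m - E a 0 ** ?l m" for m
    by (simp add: F_def tau_mult_const_left)
  have "?mult (?mult ?l (E a)) (E [:0, 1:]) m = ?D ** ?mult ?l (E a) m" for m
  proof -
    have "?mult (?mult ?l (E a)) (E [:0, 1:]) m = ?mult ?l (?mult (E a) (E [:0, 1:])) m"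
      by (rule tau_mult_assoc[OF frob_hom])
    also have "\<dots> = ?mult (?mult ?l (E [:0, 1:])) (E a) m"
      unfolding E_commute by (rule tau_mult_assoc[OF frob_hom, symmetric])
    also have "\<dots> = ?mult (tau_const ?D) (?mult ?l (E a)) m"
      unfolding l_theta by (rule tau_mult_assoc[OF frob_hom])
    finally show ?thesis
      by (simp only: tau_mult_const_left)
  qed
  moreover have "?mult (?mult (tau_const (E a 0)) ?l) (E [:0, 1:]) m = ?D ** (E a 0 ** ?l m)" for m
    by (simp add: tau_mult_assoc[OF frob_hom] tau_mult_const_left log_theta_intertwines_theta
        matrix_mul_assoc D_commute)
  ultimately have F_theta: "?mult F (E [:0, 1:]) m = ?D ** F m" for m
    by (simp add: F_def tau_mult_diff_left tau_mult_const_left matrix_diff_ldistrib)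
  have "F 0 = 0"
    by (simp add: F tau_mult_0)
  then have "F n = 0"
    using F_theta by (rule t_module_intertwiner_eq_0)
  then show ?thesis
    by (simp add: F)
qed

lemma logE_eq_log_theta: "logE E = log_theta E"
  unfolding logE_def
proof (rule the_equality)
  show "log_theta E 0 = mat 1 \<and> (\<forall>a n. (\<Sum>i\<le>n. log_theta E i ** frobM TYPE('k) i (E a (n - i))) =
      E a 0 ** log_theta E n)"
    using log_theta_intertwines by (simp add: tau_mult_def)
next
  fix l
  assume l: "l 0 = mat 1 \<and> (\<forall>a n. (\<Sum>i\<le>n. l i ** frobM TYPE('k) i (E a (n - i))) = E a 0 ** l n)"
  have l_theta: "tau_mult TYPE('k) l (E [:0, 1:]) n = E [:0, 1:] 0 ** l n" for n
    using l by (simp add: tau_mult_def)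
  have "(l - log_theta E) n = 0" for n
  proof (rule t_module_intertwiner_eq_0)
    show "(l - log_theta E) 0 = 0"
      using l by simp
    show "tau_mult TYPE('k) (l - log_theta E) (E [:0, 1:]) n = E [:0, 1:] 0 ** (l - log_theta E) n" for n
      by (simp add: tau_mult_diff_left matrix_diff_ldistrib l_theta log_theta_intertwines_theta)
  qed
  then show "l = log_theta E"
    by (simp add: fun_eq_iff)
qed

lemma logE_0: "logE E 0 = mat 1"
  by (simp add: logE_eq_log_theta)

end

section \<open>The \<open>P\<close>-adic logarithm\<close>

lemma fract_common_denominator:
  fixes e :: "'b::finite \<Rightarrow> 'a::idom fract"
  obtains d c where "d \<noteq> 0" and "\<And>b. Fract d 1 * e b = Fract (c b) 1"
proof -
  have "\<forall>b. \<exists>p. e b = Fract (fst p) (snd p) \<and> snd p \<noteq> 0"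
  proof
    fix b
    show "\<exists>p. e b = Fract (fst p) (snd p) \<and> snd p \<noteq> 0"
      by (cases "e b") auto
  qed
  then obtain p where p: "\<And>b. e b = Fract (fst (p b)) (snd (p b))" "\<And>b. snd (p b) \<noteq> 0"
    by metis
  define d where "d = (\<Prod>b\<in>UNIV. snd (p b))"
  define c where "c b = fst (p b) * (\<Prod>b'\<in>UNIV - {b}. snd (p b'))" for b
  have "d = snd (p b) * (\<Prod>b'\<in>UNIV - {b}. snd (p b'))" for b
    unfolding d_def by (rule prod.remove) simp_all
  then have "Fract d 1 * e b = Fract (c b) 1" for b
    using p[of b] by (simp add: c_def eq_fract mult_ac)
  moreover have "d \<noteq> 0"
    using p(2) by (simp add: d_def)
  ultimately show thesis
    using that by blast
qed

lemma is_A_basis_K_independent: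
  fixes \<iota> :: "'k::field poly fract \<Rightarrow> 'l::field" and f :: "'b::finite \<Rightarrow> 'l"
  assumes hom: "is_ring_hom \<iota>" and basis: "is_A_basis \<iota> f"
    and zero: "(\<Sum>b\<in>UNIV. \<iota> (e b) * f b) = 0"
  shows "e b = 0"
proof -
  obtain d c where d: "d \<noteq> 0" and c: "\<And>b. Fract d 1 * e b = Fract (c b) 1"
    using fract_common_denominator[of e] by blast
  have "(\<Sum>b\<in>UNIV. embA \<iota> (c b) * f b) = \<iota> (Fract d 1) * (\<Sum>b\<in>UNIV. \<iota> (e b) * f b)"
    using hom by (simp add: embA_def is_ring_hom_def sum_distrib_left mult_ac flip: c)
  then have "c b = 0"
    using basis zero unfolding is_A_basis_def by simp
  then have "Fract d 1 * e b = 0"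
    by (simp add: c Zero_fract_def)
  moreover have "Fract d 1 \<noteq> 0"
    using d by (simp add: Zero_fract_def eq_fract)
  ultimately show ?thesis
    by simp
qed

lemma coordK_eqI:
  fixes \<iota> :: "'k::field poly fract \<Rightarrow> 'l::field" and f :: "'b::finite \<Rightarrow> 'l"
  assumes hom: "is_ring_hom \<iota>" and basis: "is_A_basis \<iota> f"
    and x: "x = (\<Sum>b\<in>UNIV. \<iota> (c b) * f b)"
  shows "coordK \<iota> f x = c"
  unfolding coordK_def
proof (rule the_equality)
  fix c'
  assume "x = (\<Sum>b\<in>UNIV. \<iota> (c' b) * f b)"
  with x have "(\<Sum>b\<in>UNIV. \<iota> (c' b - c b) * f b) = 0"
    by (simp add: is_ring_hom_diff[OF hom] left_diff_distrib sum_subtractf)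
  then have "c' b - c b = 0" for b
    by (rule is_A_basis_K_independent[OF hom basis])
  then show "c' = c"
    by (simp add: fun_eq_iff)
qed (rule x)

lemma matLP_mat_1:
  fixes \<iota> :: "'k::field poly fract \<Rightarrow> 'l::field" and f :: "'b::finite \<Rightarrow> 'l"
  assumes hom: "is_ring_hom \<iota>" and basis: "is_A_basis \<iota> f" and "is_ring_hom j"
  shows "matLP \<iota> j f (mat 1 :: 'l^'d::finite^'d) Y = Y"
proof (intro ext)
  fix r k m
  have coord_basis: "j (coordK \<iota> f (f i) k) = (if i = k then 1 else 0)" for i
  proof -
    have "coordK \<iota> f (f i) = (\<lambda>k. if k = i then 1 else 0)"
      using hom by (intro coordK_eqI[OF hom basis])
        (simp add: is_ring_hom_def if_distrib if_distribR cong: if_cong)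
    then show ?thesis
      using assms(3) by (simp add: is_ring_hom_def)
  qed
  have coord_0: "j (coordK \<iota> f 0 k) = 0"
  proof -
    have "coordK \<iota> f 0 = (\<lambda>k. 0)"
      using hom by (intro coordK_eqI[OF hom basis]) (simp add: is_ring_hom_def)
    then show ?thesis
      using assms(3) by (simp add: is_ring_hom_def)
  qed
  have "(\<Sum>i\<in>UNIV. j (coordK \<iota> f ((mat 1 :: 'l^'d^'d) $ r $ s * f i) k) * Y s i m)
      = (if s = r then Y r k m else 0)" for s
    by (cases "s = r") (simp_all add: mat_def coord_basis coord_0 if_distrib if_distribR cong: if_cong)
  then show "matLP \<iota> j f (mat 1) Y r k m = Y r k m"
    by (simp add: matLP_def)
qed

lemma funpow_tauLP_coeff_cong:
  assumes "\<And>r k. Y r k m = Y' r k m"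
  shows "(tauLP t \<iota> j f ^^ n) Y r k m = (tauLP t \<iota> j f ^^ n) Y' r k m"
  using assms by (induction n arbitrary: r k) (simp_all add: tauLP_def)

lemma matLP_coeff_cong:
  assumes "\<And>r k. Y r k m = Y' r k m"
  shows "matLP \<iota> j f M Y r k m = matLP \<iota> j f M Y' r k m"
  using assms by (simp add: matLP_def)

lemma logEP_coeff:
  fixes \<iota> :: "'k::{finite,field} poly fract \<Rightarrow> 'l::field" and f :: "'b::finite \<Rightarrow> 'l"
    and E :: "'k poly \<Rightarrow> nat \<Rightarrow> 'l^'d::finite^'d" and j :: "'k poly fract \<Rightarrow> 'kp::field"
  assumes "is_ring_hom \<iota>" and "is_A_basis \<iota> f" and "is_ring_hom j" and "logE E 0 = mat 1"
  shows "logEP \<iota> j f E Y r k m = Y r k m +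
    (\<Sum>n<m. matLP \<iota> j f (logE E (Suc n)) ((tauLP TYPE('k) \<iota> j f ^^ Suc n) Y) r k (m - Suc n))"
  unfolding logEP_def sum.atMost_shift using assms by (simp add: matLP_mat_1)

text \<open>Injectivity holds on all of \<open>\<bbbT>\<^sub>z(L\<^sub>P)\<^sup>d\<close>, not only on \<open>\<Omega>\<^sub>z\<^sup>+\<close>: the
  \<open>z\<^sup>m\<close>-coefficient of the logarithm is that of its argument plus terms involving only
  lower \<open>z\<close>-degrees.\<close>
lemma inj_logEP:
  fixes \<iota> :: "'k::{finite,field} poly fract \<Rightarrow> 'l::field" and f :: "'b::finite \<Rightarrow> 'l"
    and E :: "'k poly \<Rightarrow> nat \<Rightarrow> 'l^'d::finite^'d" and j :: "'k poly fract \<Rightarrow> 'kp::field"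
  assumes "is_ring_hom \<iota>" and "is_A_basis \<iota> f" and "is_ring_hom j" and "logE E 0 = mat 1"
  shows "inj (logEP \<iota> j f E)"
proof (rule injI)
  fix Y Y'
  assume eq: "logEP \<iota> j f E Y = logEP \<iota> j f E Y'"
  have "Y r k m = Y' r k m" for r k m
  proof (induction m arbitrary: r k rule: less_induct)
    case (less m)
    have "(\<Sum>n<m. matLP \<iota> j f (logE E (Suc n)) ((tauLP TYPE('k) \<iota> j f ^^ Suc n) Y) r k (m - Suc n)) =
        (\<Sum>n<m. matLP \<iota> j f (logE E (Suc n)) ((tauLP TYPE('k) \<iota> j f ^^ Suc n) Y') r k (m - Suc n))"
      by (intro sum.cong refl matLP_coeff_cong funpow_tauLP_coeff_cong less.IH) auto
    with eq show ?case
      using logEP_coeff[OF assms, of Y r k m] logEP_coeff[OF assms, of Y' r k m] by simp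
  qed
  then show "Y = Y'"
    by (simp add: fun_eq_iff)
qed

theorem mainTheorem18:
  fixes \<iota> :: "'k::{finite,field_gcd} poly fract \<Rightarrow> 'l::field"
    and E :: "'k poly \<Rightarrow> nat \<Rightarrow> 'l^'d::finite^'d"
    and f :: "'b::finite \<Rightarrow> 'l"
    and P :: "'k poly"
    and j :: "'k poly fract \<Rightarrow> 'kp::field"
    and w :: "'kp \<Rightarrow> ereal"
  assumes "is_ring_hom \<iota>"
    and "finite_ext \<iota>"
    and "is_A_basis \<iota> f"
    and "is_t_module \<iota> E"
    and "lead_coeff P = 1" and "irreducible P"
    and "is_P_adic_completion P j w"
  shows "inj_on (logEP \<iota> j f E) (Omega_plus w)"
proof -
  have "is_ring_hom j"
    using assms(7) by (simp add: is_P_adic_completion_def)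
  moreover have "logE E 0 = mat 1"
    using assms(1,4) by (rule logE_0)
  ultimately have "inj (logEP \<iota> j f E)"
    using assms(1,3) by (intro inj_logEP)
  then show ?thesis
    by (rule inj_on_subset) simp
qed

end
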